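(* The function $g\mapsto \|g\|_2^2$ from $\mathbb{F}_\infty$ to $\mathbb{N}$ is a morphism on an arbitrary large subset of $\mathbb{F}_\infty$: for every $N, M\in\mathbb{N}$ and every $s_1,\dots,s_M\in\mathbb{N}$ there exist elements $g_{n,k}\in\mathbb{F}_\infty$ ($1\le n\le N$, $1\le k\le M$) such that $\|g_{n,j}^{-1}g_{m,k}\|_2^2 = s_j+s_k$ for all $j,k$ and all $n\ne m$.
   Context: $\mathbb{N}=\{0,1,2,\dots\}$. $\mathbb{F}_\infty$ is the free group on countably infinitely many free generators. Every $g\ne e$ in $\mathbb{F}_\infty$ has a unique reduced form $g = a_1^{k_1}a_2^{k_2}\cdots a_n^{k_n}$ with $a_j$ free generators, $a_j\neq a_{j+1}$, and $k_j\in\mathbb{Z}\setminus\{0\}$; for $0<p\le 2$ the $\ell^p$ length is $\|g\|_p = (\sum_{j=1}^n |k_j|^p)^{1/p}$, and $\|e\|_p=0$. *)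

theory Defs
  imports Main
begin

text \<open>Elements of the free group on countably many free generators (indexed by nat),
  represented by their unique reduced form a_1^k_1 ... a_n^k_n as a list of syllables
  (generator, exponent) with nonzero exponents and distinct adjacent generators.\<close>

type_synonym fword = "(nat \<times> int) list"

definition reduced :: "fword \<Rightarrow> bool" where
  "reduced w \<longleftrightarrow> (\<forall>i<length w. snd (w ! i) \<noteq> 0)
                 \<and> (\<forall>i. Suc i < length w \<longrightarrow> fst (w ! i) \<noteq> fst (w ! Suc i))"

definition F_inf :: "fword set" where
  "F_inf = {w. reduced w}"

fun cons_syl :: "nat \<times> int \<Rightarrow> fword \<Rightarrow> fword" where
  "cons_syl (a, k) [] = (if k = 0 then [] else [(a, k)])"
| "cons_syl (a, k) ((b, l) # ws) =
     (if k = 0 then (b, l) # ws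
      else if a = b then (if k + l = 0 then ws else (a, k + l) # ws)
      else (a, k) # (b, l) # ws)"

definition fmult :: "fword \<Rightarrow> fword \<Rightarrow> fword" where
  "fmult xs ys = foldr cons_syl xs ys"

definition finv :: "fword \<Rightarrow> fword" where
  "finv xs = rev (map (\<lambda>(a, k). (a, - k)) xs)"

definition norm2_sq :: "fword \<Rightarrow> nat" where
  "norm2_sq w = (\<Sum>(a, k)\<leftarrow>w. nat (k ^ 2))"

end

theory Submission
  imports Defs
begin

text \<open>Row \<open>n\<close> uses only the two generators \<open>2n\<close>, \<open>2n+1\<close>, and \<open>g\<^sub>n\<^sub>,\<^sub>k\<close> is the alternating
  word of length \<open>s\<^sub>k\<close> in them with all exponents \<open>1\<close>, so \<open>\<parallel>g\<^sub>n\<^sub>,\<^sub>k\<parallel>\<^sub>2\<^sup>2 = s\<^sub>k\<close>. For \<open>n \<noteq> m\<close> the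
  words \<open>g\<^sub>n\<^sub>,\<^sub>j\<^sup>-\<^sup>1\<close> and \<open>g\<^sub>m\<^sub>,\<^sub>k\<close> share no generator, so no cancellation occurs in their product,
  whose reduced form is the plain concatenation; the squared \<open>\<ell>\<^sup>2\<close> length is additive on it.\<close>

lemma reduced_iff:
  "reduced w \<longleftrightarrow> (\<forall>x\<in>set w. snd x \<noteq> 0) \<and> successively (\<lambda>x y. fst x \<noteq> fst y) w"
  unfolding reduced_def successively_conv_nth all_set_conv_all_nth by auto

lemma fmult_reduced_append:
  "reduced (xs @ ys) \<Longrightarrow> fmult xs ys = xs @ ys"
proof (induction xs)
  case Nil
  then show ?case by (simp add: fmult_def)
next
  case (Cons x xs)
  obtain a k where x: "x = (a, k)" by (cases x)
  have "reduced (xs @ ys)" and k: "k \<noteq> 0"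
    using Cons.prems x by (auto simp: reduced_iff successively_Cons)
  then have IH: "foldr cons_syl xs ys = xs @ ys" using Cons.IH by (simp add: fmult_def)
  show ?case
  proof (cases "xs @ ys")
    case Nil
    then show ?thesis using IH k x by (simp add: fmult_def)
  next
    case (Cons y zs)
    obtain b l where y: "y = (b, l)" by (cases y)
    have "a \<noteq> b" using Cons.prems \<open>xs @ ys = y # zs\<close> x y by (auto simp: reduced_iff)
    then show ?thesis using IH k x y Cons by (simp add: fmult_def)
  qed
qed

lemma reduced_finv: "reduced w \<Longrightarrow> reduced (finv w)"
  unfolding reduced_iff finv_def successively_rev successively_map
  by (auto simp: case_prod_beta elim: successively_mono)

lemma reduced_append_disjoint:
  assumes "reduced xs" "reduced ys" "fst ` set xs \<inter> fst ` set ys = {}"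
  shows "reduced (xs @ ys)"
proof -
  have "xs = [] \<or> ys = [] \<or> fst (last xs) \<noteq> fst (hd ys)"
    using assms(3) by (metis disjoint_iff image_eqI last_in_set list.set_sel(1))
  then show ?thesis
    using assms(1,2) by (auto simp: reduced_iff successively_append_iff)
qed

lemma norm2_sq_append: "norm2_sq (xs @ ys) = norm2_sq xs + norm2_sq ys"
  by (simp add: norm2_sq_def)

lemma norm2_sq_finv: "norm2_sq (finv w) = norm2_sq w"
  by (induction w) (auto simp: norm2_sq_def finv_def)

lemma generators_finv: "fst ` set (finv w) = fst ` set w"
  by (force simp: finv_def)

lemma norm2_sq_fmult_finv_disjoint:
  assumes "reduced u" "reduced v" "fst ` set u \<inter> fst ` set v = {}"
  shows "norm2_sq (fmult (finv u) v) = norm2_sq u + norm2_sq v"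
proof -
  have "reduced (finv u @ v)"
    using assms by (intro reduced_append_disjoint reduced_finv) (auto simp: generators_finv)
  then show ?thesis by (simp add: fmult_reduced_append norm2_sq_append norm2_sq_finv)
qed

definition alt_word :: "nat \<Rightarrow> nat \<Rightarrow> nat \<Rightarrow> fword" where
  "alt_word a b L = map (\<lambda>i. (if even i then a else b, 1)) [0..<L]"

lemma reduced_alt_word: "a \<noteq> b \<Longrightarrow> reduced (alt_word a b L)"
  unfolding reduced_def alt_word_def by (auto simp: nth_upt)

lemma norm2_sq_alt_word: "norm2_sq (alt_word a b L) = L"
  unfolding norm2_sq_def alt_word_def by (induction L) auto

lemma generators_alt_word: "fst ` set (alt_word a b L) \<subseteq> {a, b}"
  unfolding alt_word_def by auto

theorem proposition4p1:
  fixes N M :: nat and s :: "nat \<Rightarrow> nat"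
  shows "\<exists>g :: nat \<Rightarrow> nat \<Rightarrow> fword.
           (\<forall>n\<in>{1..N}. \<forall>k\<in>{1..M}. g n k \<in> F_inf) \<and>
           (\<forall>n\<in>{1..N}. \<forall>m\<in>{1..N}. \<forall>j\<in>{1..M}. \<forall>k\<in>{1..M}.
              n \<noteq> m \<longrightarrow> norm2_sq (fmult (finv (g n j)) (g m k)) = s j + s k)"
proof -
  define g where "g n k = alt_word (2 * n) (2 * n + 1) (s k)" for n k
  have reduced_g: "reduced (g n k)" for n k
    by (simp add: g_def reduced_alt_word)
  have disjoint: "fst ` set (g n j) \<inter> fst ` set (g m k) = {}" if "n \<noteq> m" for n m j k
  proof -
    have "{2 * n, 2 * n + 1} \<inter> {2 * m, 2 * m + 1} = {}" using that by auto
    then show ?thesis unfolding g_def using generators_alt_word by blast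
  qed
  have "norm2_sq (fmult (finv (g n j)) (g m k)) = s j + s k" if "n \<noteq> m" for n m j k
    using norm2_sq_fmult_finv_disjoint[OF reduced_g reduced_g disjoint[OF that]]
    by (simp add: g_def norm2_sq_alt_word)
  then show ?thesis
    using reduced_g unfolding F_inf_def by blast
qed

end
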